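(* Let $\alpha:\mathbb{C}\to\mathbb{C}$ be an exponential automorphism, i.e. a function satisfying $\alpha(z_1+z_2)=\alpha(z_1)+\alpha(z_2)$ and $\alpha(e^z)=e^{\alpha(z)}$ for all $z,z_1,z_2\in\mathbb{C}$. Let $r$ be a positive rational number, let $k$ be a positive integer, and let $r^{1/k}$ denote the positive real $k$th root of $r$. Then $\alpha(r^{1/k})=\zeta r^{1/k}$ for some $k$th root of unity $\zeta$. *)

theory Defs
  imports Complex_Main
begin

definition exponential_automorphism :: "(complex \<Rightarrow> complex) \<Rightarrow> bool" where
  "exponential_automorphism \<alpha> \<longleftrightarrow>
     (\<forall>z1 z2. \<alpha> (z1 + z2) = \<alpha> z1 + \<alpha> z2) \<and> (\<forall>z. \<alpha> (exp z) = exp (\<alpha> z))"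

end

theory Submission
  imports Defs "HOL-Analysis.Complex_Transcendental"
begin

text \<open>An exponential automorphism is additive and, because every nonzero complex number
  is an exponential, also multiplicative; hence it fixes \<open>\<rat>\<close>. If \<open>x\<^sup>k\<close> is a
  nonzero rational then \<open>(\<alpha> x)\<^sup>k = \<alpha> (x\<^sup>k) = x\<^sup>k\<close>, so \<open>\<alpha> x / x\<close> is a \<open>k\<close>-th root of unity.\<close>

context
  fixes \<alpha> :: "complex \<Rightarrow> complex"
  assumes exp_auto: "exponential_automorphism \<alpha>"
begin

lemma exponential_automorphism_add: "\<alpha> (a + b) = \<alpha> a + \<alpha> b"
  using exp_auto unfolding exponential_automorphism_def by blast

lemma exponential_automorphism_exp: "\<alpha> (exp z) = exp (\<alpha> z)"
  using exp_auto unfolding exponential_automorphism_def by blast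

lemma exponential_automorphism_zero: "\<alpha> 0 = 0"
  using exponential_automorphism_add[of 0 0] by simp

lemma exponential_automorphism_one: "\<alpha> 1 = 1"
  using exponential_automorphism_exp[of 0] by (simp add: exponential_automorphism_zero)

lemma exponential_automorphism_mult: "\<alpha> (a * b) = \<alpha> a * \<alpha> b"
proof (cases "a = 0 \<or> b = 0")
  case True
  then show ?thesis by (auto simp: exponential_automorphism_zero)
next
  case False
  then have "a * b = exp (Ln a + Ln b)" by (simp add: exp_add)
  then have "\<alpha> (a * b) = \<alpha> (exp (Ln a + Ln b))" by simp
  also have "\<dots> = exp (\<alpha> (Ln a) + \<alpha> (Ln b))"
    by (simp only: exponential_automorphism_exp exponential_automorphism_add)
  also have "\<dots> = \<alpha> (exp (Ln a)) * \<alpha> (exp (Ln b))"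
    by (simp add: exp_add exponential_automorphism_exp)
  also have "\<dots> = \<alpha> a * \<alpha> b" using False by simp
  finally show ?thesis .
qed

lemma exponential_automorphism_power: "\<alpha> (x ^ n) = \<alpha> x ^ n"
  by (induction n) (simp_all add: exponential_automorphism_one exponential_automorphism_mult)

lemma exponential_automorphism_of_nat: "\<alpha> (of_nat n) = of_nat n"
  by (induction n) (simp_all add: exponential_automorphism_zero exponential_automorphism_one
      exponential_automorphism_add)

lemma exponential_automorphism_uminus: "\<alpha> (- z) = - \<alpha> z"
  using exponential_automorphism_add[of z "- z"] by (simp add: exponential_automorphism_zero add_eq_0_iff)

lemma exponential_automorphism_of_int: "\<alpha> (of_int n) = of_int n"
  by (cases n rule: int_cases2)
    (simp_all add: exponential_automorphism_of_nat exponential_automorphism_uminus)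

lemma exponential_automorphism_Rats:
  assumes "q \<in> \<rat>"
  shows "\<alpha> q = q"
proof -
  obtain a b where "b > 0" and q: "q = of_int a / of_int b"
    using Rats_cases'[OF assms] by blast
  then have "of_int b * q = of_int a" by simp
  then have "of_int b * \<alpha> q = of_int a"
    by (metis exponential_automorphism_mult exponential_automorphism_of_int)
  then have "\<alpha> q = of_int a / of_int b" using \<open>b > 0\<close> by (simp add: eq_divide_eq mult.commute)
  then show ?thesis using q by simp
qed

lemma exponential_automorphism_rational_power_root:
  assumes "x ^ k \<in> \<rat>" and "x \<noteq> 0"
  shows "\<exists>\<zeta>. \<zeta> ^ k = 1 \<and> \<alpha> x = \<zeta> * x"
proof -
  have "\<alpha> x ^ k = x ^ k"
    using assms(1) by (simp add: exponential_automorphism_Rats flip: exponential_automorphism_power)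
  then have "(\<alpha> x / x) ^ k = 1" using assms(2) by (simp add: power_divide)
  moreover have "\<alpha> x = (\<alpha> x / x) * x" using assms(2) by simp
  ultimately show ?thesis by blast
qed

end

theorem mainTheorem4:
  fixes \<alpha> :: "complex \<Rightarrow> complex" and r :: rat and k :: nat
  assumes "exponential_automorphism \<alpha>"
    and "r > 0" and "k > 0"
  shows "\<exists>\<zeta>::complex. \<zeta> ^ k = 1 \<and>
           \<alpha> (complex_of_real (root k (of_rat r))) = \<zeta> * complex_of_real (root k (of_rat r))"
proof (rule exponential_automorphism_rational_power_root[OF assms(1)])
  have "root k (of_rat r) ^ k = (of_rat r :: real)" using assms(2,3) by simp
  then show "complex_of_real (root k (of_rat r)) ^ k \<in> \<rat>"
    by (simp flip: of_real_power)
  show "complex_of_real (root k (of_rat r)) \<noteq> 0" using assms(2,3) by simp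
qed

end
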